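(* Let $G$ be a connected graph on $n\ge2$ vertices, $\alpha\in\mathbb{R}$, with vertices labeled so that $({}^\alpha\mathbb{M})_1\ge({}^\alpha\mathbb{M})_2\ge\cdots\ge({}^\alpha\mathbb{M})_n$. Let $N=\max_{1\le i,j\le n} d_{ij}\mathbb{D}_j^\alpha/\mathbb{D}_i^\alpha$. Then for $1\le i\le n$, \[\rho(\mathbb{D}(G))\le \frac{({}^\alpha\mathbb{M})_i-N+\sqrt{(({}^\alpha\mathbb{M})_i+N)^2+4N\sum_{k=1}^{i-1}\big(({}^\alpha\mathbb{M})_k-({}^\alpha\mathbb{M})_i\big)}}{2}.\] Equality holds if and only if $({}^\alpha\mathbb{M})_1=\cdots=({}^\alpha\mathbb{M})_n$, or for some $2\le t\le i$: (i) $d_{kl}\mathbb{D}_l^\alpha/\mathbb{D}_k^\alpha=N$ for all $1\le k\le n$, $1\le l\le t-1$, $k\ne l$; (ii) $({}^\alpha\mathbb{M})_t=\cdots=({}^\alpha\mathbb{M})_n$.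
   Context: $\mathbb{D}(G)=(d_{ij})$ is the distance matrix of $G$, $d_{ij}$ the distance between $v_i$ and $v_j$. The transmission of $v_i$ is $\mathbb{D}_i=\sum_{j}d_{ij}$. The generalized average transmission is $({}^\alpha\mathbb{M})_i=\frac{\sum_{j=1}^n d_{ij}\mathbb{D}_j^\alpha}{\mathbb{D}_i^\alpha}$. $\rho$ is the spectral radius. An empty sum equals $0$. *)

theory Defs
  imports Complex_Main "Jordan_Normal_Form.Spectral_Radius"
begin

definition simple_graph :: "nat \<Rightarrow> (nat \<Rightarrow> nat \<Rightarrow> bool) \<Rightarrow> bool" where
  "simple_graph n E \<longleftrightarrow>
     (\<forall>i j. E i j \<longrightarrow> i < n \<and> j < n) \<and> (\<forall>i j. E i j \<longrightarrow> E j i) \<and> (\<forall>i. \<not> E i i)"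

definition is_walk :: "nat \<Rightarrow> (nat \<Rightarrow> nat \<Rightarrow> bool) \<Rightarrow> nat list \<Rightarrow> nat \<Rightarrow> nat \<Rightarrow> bool" where
  "is_walk n E p i j \<longleftrightarrow> p \<noteq> [] \<and> hd p = i \<and> last p = j \<and> (\<forall>v\<in>set p. v < n)
     \<and> (\<forall>m. Suc m < length p \<longrightarrow> E (p ! m) (p ! Suc m))"

definition connected_graph :: "nat \<Rightarrow> (nat \<Rightarrow> nat \<Rightarrow> bool) \<Rightarrow> bool" where
  "connected_graph n E \<longleftrightarrow> simple_graph n E \<and> (\<forall>i<n. \<forall>j<n. \<exists>p. is_walk n E p i j)"

definition gdist :: "nat \<Rightarrow> (nat \<Rightarrow> nat \<Rightarrow> bool) \<Rightarrow> nat \<Rightarrow> nat \<Rightarrow> nat" where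
  "gdist n E i j = (LEAST k. \<exists>p. is_walk n E p i j \<and> length p = Suc k)"

text \<open>Distance matrix D(G) as a complex matrix (for the spectral radius).\<close>

definition dist_mat :: "nat \<Rightarrow> (nat \<Rightarrow> nat \<Rightarrow> bool) \<Rightarrow> complex mat" where
  "dist_mat n E = mat n n (\<lambda>(i, j). of_nat (gdist n E i j))"

definition transmission :: "nat \<Rightarrow> (nat \<Rightarrow> nat \<Rightarrow> bool) \<Rightarrow> nat \<Rightarrow> real" where
  "transmission n E i = (\<Sum>j<n. real (gdist n E i j))"

definition gen_avg_trans :: "nat \<Rightarrow> (nat \<Rightarrow> nat \<Rightarrow> bool) \<Rightarrow> real \<Rightarrow> nat \<Rightarrow> real" where
  "gen_avg_trans n E \<alpha> i =
     (\<Sum>j<n. real (gdist n E i j) * transmission n E j powr \<alpha>) / transmission n E i powr \<alpha>"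

end

theory Submission
  imports Defs
begin

(*
  Write T_k = D_k^alpha and b_kl = d_kl T_l / T_k.  The matrix (b_kl) is similar to the distance
  matrix, its row sums are the M_k, and its off-diagonal entries lie in (0, N].  Let theta be the
  claimed bound, i.e. the larger root of theta (theta + N) = M_i (theta + N) + N S with
  S = sum_{k<i} (M_k - M_i), and take the test vector u_k = theta + N + (M_k - M_i) for k < i and
  u_k = theta + N otherwise.  A direct computation gives theta u_k - (b u)_k as a sum of the terms
  (N - b_kl)(M_l - M_i) for l < i, l ~= k, plus (M_i - M_k)(theta + N) for k >= i, all nonnegative
  since the M_k are sorted.  Comparing an eigenvector of modulus rho with the positive vector T u at
  a coordinate maximising their ratio then yields rho <= theta, and, because all off-diagonal
  distances are positive, equality forces every one of these defects to vanish, which is the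
  stated equality condition.
*)

section \<open>Collatz--Wielandt type bounds for nonnegative matrices\<close>

lemma obtain_max_ratio:
  fixes x w :: "nat \<Rightarrow> real"
  assumes w_pos: "\<And>l. l < n \<Longrightarrow> 0 < w l" and x_nonneg: "\<And>l. l < n \<Longrightarrow> 0 \<le> x l"
    and k0: "k0 < n" "0 < x k0"
  obtains p m where "p < n" "0 < m" "x p = m * w p" "\<And>l. l < n \<Longrightarrow> x l \<le> m * w l"
proof -
  define q where "q l = x l / w l" for l
  have "Max (q ` {..<n}) \<in> q ` {..<n}"
    using k0(1) by (intro Max_in) auto
  then obtain p where p: "p < n" "q p = Max (q ` {..<n})" by auto
  have q_le: "q l \<le> q p" if "l < n" for l
    unfolding p(2) by (rule Max_ge) (use that in auto)
  have "0 < q k0"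
    using k0 w_pos[OF k0(1)] by (simp add: q_def)
  show thesis
  proof
    show "0 < q p" using q_le[OF k0(1)] \<open>0 < q k0\<close> by simp
    show "x p = q p * w p" using w_pos[OF p(1)] by (simp add: q_def)
    show "x l \<le> q p * w l" if "l < n" for l
      using q_le[OF that] w_pos[OF that] by (simp add: q_def divide_le_eq)
  qed (fact p(1))
qed

lemma subinvariant_le_weighted_row_bound:
  fixes d :: "nat \<Rightarrow> nat \<Rightarrow> real" and x w :: "nat \<Rightarrow> real"
  assumes d_nonneg: "\<And>k l. k < n \<Longrightarrow> l < n \<Longrightarrow> 0 \<le> d k l"
    and w_pos: "\<And>l. l < n \<Longrightarrow> 0 < w l"
    and rows: "\<And>k. k < n \<Longrightarrow> (\<Sum>l<n. d k l * w l) \<le> \<theta> * w k"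
    and x_nonneg: "\<And>l. l < n \<Longrightarrow> 0 \<le> x l" and k0: "k0 < n" "0 < x k0"
    and sub: "\<And>k. k < n \<Longrightarrow> \<mu> * x k \<le> (\<Sum>l<n. d k l * x l)"
  shows "\<mu> \<le> \<theta>"
proof -
  obtain p m where p: "p < n" "0 < m" "x p = m * w p" and x_le: "\<And>l. l < n \<Longrightarrow> x l \<le> m * w l"
    using obtain_max_ratio[of n w x, OF w_pos x_nonneg k0] by blast
  have "\<mu> * x p \<le> (\<Sum>l<n. d p l * x l)" by (rule sub[OF p(1)])
  also have "\<dots> \<le> (\<Sum>l<n. d p l * (m * w l))"
    by (intro sum_mono mult_left_mono x_le d_nonneg p(1)) auto
  also have "\<dots> = m * (\<Sum>l<n. d p l * w l)" by (simp add: sum_distrib_left ac_simps)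
  also have "\<dots> \<le> m * (\<theta> * w p)" using rows[OF p(1)] p(2) by simp
  finally have "\<mu> * (m * w p) \<le> \<theta> * (m * w p)" using p(3) by (simp add: ac_simps)
  thus ?thesis using p(2) w_pos[OF p(1)] by simp
qed

lemma weighted_sum_le_imp_eq:
  fixes c f g :: "nat \<Rightarrow> real"
  assumes c_nonneg: "\<And>l. l < n \<Longrightarrow> 0 \<le> c l" and f_le: "\<And>l. l < n \<Longrightarrow> f l \<le> g l"
    and sum_le: "(\<Sum>l<n. c l * g l) \<le> (\<Sum>l<n. c l * f l)"
    and l: "l < n" "0 < c l"
  shows "f l = g l"
proof -
  have slack_nonneg: "0 \<le> c l * (g l - f l)" if "l \<in> {..<n}" for l
    using c_nonneg f_le that by simp
  have "(\<Sum>l<n. c l * (g l - f l)) \<le> 0"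
    using sum_le by (simp add: right_diff_distrib sum_subtractf)
  moreover have "0 \<le> (\<Sum>l<n. c l * (g l - f l))"
    using slack_nonneg by (rule sum_nonneg)
  ultimately have "(\<Sum>l<n. c l * (g l - f l)) = 0" by linarith
  hence "c l * (g l - f l) = 0"
    using sum_nonneg_eq_0_iff[of "{..<n}" "\<lambda>l. c l * (g l - f l)"] slack_nonneg l(1) by simp
  thus ?thesis using l(2) by simp
qed

lemma subinvariant_ge_weighted_row_bound_imp_eq:
  fixes d :: "nat \<Rightarrow> nat \<Rightarrow> real" and x w :: "nat \<Rightarrow> real"
  assumes d_nonneg: "\<And>k l. k < n \<Longrightarrow> l < n \<Longrightarrow> 0 \<le> d k l"
    and d_pos: "\<And>k l. k < n \<Longrightarrow> l < n \<Longrightarrow> k \<noteq> l \<Longrightarrow> 0 < d k l"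
    and w_pos: "\<And>l. l < n \<Longrightarrow> 0 < w l"
    and rows: "\<And>k. k < n \<Longrightarrow> (\<Sum>l<n. d k l * w l) \<le> \<theta> * w k"
    and x_nonneg: "\<And>l. l < n \<Longrightarrow> 0 \<le> x l" and k0: "k0 < n" "0 < x k0"
    and sub: "\<And>k. k < n \<Longrightarrow> \<mu> * x k \<le> (\<Sum>l<n. d k l * x l)"
    and ge: "\<theta> \<le> \<mu>"
  shows "\<And>k. k < n \<Longrightarrow> (\<Sum>l<n. d k l * w l) = \<theta> * w k"
proof -
  obtain p m where p: "p < n" "0 < m" "x p = m * w p" and x_le: "\<And>l. l < n \<Longrightarrow> x l \<le> m * w l"
    using obtain_max_ratio[of n w x, OF w_pos x_nonneg k0] by blast
  have "(\<Sum>l<n. d p l * (m * w l)) = m * (\<Sum>l<n. d p l * w l)"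
    by (simp add: sum_distrib_left ac_simps)
  also have "\<dots> \<le> \<theta> * x p"
    using mult_left_mono[OF rows[OF p(1)], of m] p(2,3) by (simp add: ac_simps)
  also have "\<dots> \<le> \<mu> * x p"
    using ge x_nonneg[OF p(1)] by (rule mult_right_mono)
  also have "\<dots> \<le> (\<Sum>l<n. d p l * x l)" by (rule sub[OF p(1)])
  finally have x_eq: "x l = m * w l" if "l < n" for l
    using weighted_sum_le_imp_eq[of n "d p" x "\<lambda>l. m * w l" l] d_nonneg[OF p(1)] x_le d_pos[OF p(1)] p(3) that
    by (cases "l = p") auto
  fix k assume k: "k < n"
  have "m * (\<theta> * w k) \<le> \<mu> * x k"
    using ge x_eq[OF k] p(2) w_pos[OF k] by (simp add: mult_right_mono)
  also have "\<dots> \<le> (\<Sum>l<n. d k l * x l)" by (rule sub[OF k])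
  also have "\<dots> = m * (\<Sum>l<n. d k l * w l)" by (simp add: x_eq sum_distrib_left ac_simps)
  finally show "(\<Sum>l<n. d k l * w l) = \<theta> * w k"
    using rows[OF k] p(2) by (simp add: antisym)
qed

lemma eigenvector_nonzero_entry:
  assumes "A \<in> carrier_mat n n" "eigenvector A v \<mu>"
  obtains k where "k < n" "v $ k \<noteq> 0"
proof -
  have "v \<in> carrier_vec n" "v \<noteq> 0\<^sub>v n"
    using assms unfolding eigenvector_def by auto
  thus thesis using that by (metis eq_vecI carrier_vecD index_zero_vec)
qed

lemma eigenvector_norm_subinvariant:
  fixes A :: "complex mat" and d :: "nat \<Rightarrow> nat \<Rightarrow> real"
  assumes A: "A \<in> carrier_mat n n"
    and A_entries: "\<And>k l. k < n \<Longrightarrow> l < n \<Longrightarrow> A $$ (k, l) = complex_of_real (d k l)"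
    and d_nonneg: "\<And>k l. k < n \<Longrightarrow> l < n \<Longrightarrow> 0 \<le> d k l"
    and ev: "eigenvector A v \<mu>" and k: "k < n"
  shows "cmod \<mu> * cmod (v $ k) \<le> (\<Sum>l<n. d k l * cmod (v $ l))"
proof -
  have v: "v \<in> carrier_vec n" and Av: "A *\<^sub>v v = \<mu> \<cdot>\<^sub>v v"
    using ev A unfolding eigenvector_def by auto
  have "\<mu> * v $ k = (A *\<^sub>v v) $ k" using Av k v by simp
  also have "\<dots> = (\<Sum>l<n. complex_of_real (d k l) * v $ l)"
    using k A v by (auto simp: scalar_prod_def A_entries atLeast0LessThan intro!: sum.cong)
  finally have "cmod \<mu> * cmod (v $ k) = cmod (\<Sum>l<n. complex_of_real (d k l) * v $ l)"
    by (metis norm_mult)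
  also have "\<dots> \<le> (\<Sum>l<n. cmod (complex_of_real (d k l) * v $ l))" by (rule norm_sum)
  also have "\<dots> = (\<Sum>l<n. d k l * cmod (v $ l))"
    by (rule sum.cong) (auto simp: norm_mult d_nonneg[OF k])
  finally show ?thesis .
qed

lemma spectral_radius_le_weighted_row_bound:
  fixes A :: "complex mat" and d :: "nat \<Rightarrow> nat \<Rightarrow> real" and w :: "nat \<Rightarrow> real"
  assumes A: "A \<in> carrier_mat n n" and n: "0 < n"
    and A_entries: "\<And>k l. k < n \<Longrightarrow> l < n \<Longrightarrow> A $$ (k, l) = complex_of_real (d k l)"
    and d_nonneg: "\<And>k l. k < n \<Longrightarrow> l < n \<Longrightarrow> 0 \<le> d k l"
    and w_pos: "\<And>l. l < n \<Longrightarrow> 0 < w l"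
    and rows: "\<And>k. k < n \<Longrightarrow> (\<Sum>l<n. d k l * w l) \<le> \<theta> * w k"
  shows "spectral_radius A \<le> \<theta>"
proof -
  obtain \<mu> v where "spectral_radius A = cmod \<mu>" "eigenvector A v \<mu>"
    using spectral_radius_mem_max(1)[OF A n] unfolding spectrum_def eigenvalue_def by auto
  moreover obtain k0 where "k0 < n" "v $ k0 \<noteq> 0"
    using eigenvector_nonzero_entry[OF A \<open>eigenvector A v \<mu>\<close>] .
  ultimately show ?thesis
    using subinvariant_le_weighted_row_bound[of n d w \<theta> "\<lambda>l. cmod (v $ l)" k0 "cmod \<mu>"]
      eigenvector_norm_subinvariant[OF A A_entries d_nonneg] d_nonneg w_pos rows by auto
qed

lemma spectral_radius_ge_of_weighted_row_eq:
  fixes A :: "complex mat" and d :: "nat \<Rightarrow> nat \<Rightarrow> real" and w :: "nat \<Rightarrow> real"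
  assumes A: "A \<in> carrier_mat n n" and n: "0 < n"
    and A_entries: "\<And>k l. k < n \<Longrightarrow> l < n \<Longrightarrow> A $$ (k, l) = complex_of_real (d k l)"
    and w_pos: "\<And>l. l < n \<Longrightarrow> 0 < w l"
    and rows: "\<And>k. k < n \<Longrightarrow> (\<Sum>l<n. d k l * w l) = \<theta> * w k"
  shows "\<theta> \<le> spectral_radius A"
proof -
  define v where "v = vec n (\<lambda>k. complex_of_real (w k))"
  have "A *\<^sub>v v = complex_of_real \<theta> \<cdot>\<^sub>v v"
  proof (rule eq_vecI)
    fix k assume "k < dim_vec (complex_of_real \<theta> \<cdot>\<^sub>v v)"
    hence k: "k < n" unfolding v_def by simp
    have "(A *\<^sub>v v) $ k = complex_of_real (\<Sum>l<n. d k l * w l)"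
      using k A by (auto simp: scalar_prod_def A_entries v_def atLeast0LessThan intro!: sum.cong)
    thus "(A *\<^sub>v v) $ k = (complex_of_real \<theta> \<cdot>\<^sub>v v) $ k"
      using k rows[OF k] unfolding v_def by simp
  qed (use A in \<open>simp add: v_def\<close>)
  moreover have "v \<noteq> 0\<^sub>v n"
    using w_pos[OF n] n by (auto simp: v_def dest!: arg_cong[where f = "\<lambda>u. u $ 0"])
  ultimately have "complex_of_real \<theta> \<in> spectrum A"
    using A unfolding spectrum_def eigenvalue_def eigenvector_def
    by (intro CollectI exI[of _ v]) (auto simp: v_def)
  hence "cmod (complex_of_real \<theta>) \<le> spectral_radius A"
    using spectral_radius_mem_max(2)[OF A n] by blast
  thus ?thesis by simp
qed

lemma spectral_radius_eq_weighted_row_bound_iff: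
  fixes A :: "complex mat" and d :: "nat \<Rightarrow> nat \<Rightarrow> real" and w :: "nat \<Rightarrow> real"
  assumes A: "A \<in> carrier_mat n n" and n: "0 < n"
    and A_entries: "\<And>k l. k < n \<Longrightarrow> l < n \<Longrightarrow> A $$ (k, l) = complex_of_real (d k l)"
    and d_nonneg: "\<And>k l. k < n \<Longrightarrow> l < n \<Longrightarrow> 0 \<le> d k l"
    and d_pos: "\<And>k l. k < n \<Longrightarrow> l < n \<Longrightarrow> k \<noteq> l \<Longrightarrow> 0 < d k l"
    and w_pos: "\<And>l. l < n \<Longrightarrow> 0 < w l"
    and rows: "\<And>k. k < n \<Longrightarrow> (\<Sum>l<n. d k l * w l) \<le> \<theta> * w k"
  shows "spectral_radius A = \<theta> \<longleftrightarrow> (\<forall>k<n. (\<Sum>l<n. d k l * w l) = \<theta> * w k)"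
proof
  assume eq: "spectral_radius A = \<theta>"
  obtain \<mu> v where "spectral_radius A = cmod \<mu>" "eigenvector A v \<mu>"
    using spectral_radius_mem_max(1)[OF A n] unfolding spectrum_def eigenvalue_def by auto
  moreover obtain k0 where "k0 < n" "v $ k0 \<noteq> 0"
    using eigenvector_nonzero_entry[OF A \<open>eigenvector A v \<mu>\<close>] .
  ultimately show "\<forall>k<n. (\<Sum>l<n. d k l * w l) = \<theta> * w k"
    using subinvariant_ge_weighted_row_bound_imp_eq[of n d w \<theta> "\<lambda>l. cmod (v $ l)" k0 "cmod \<mu>"]
      eigenvector_norm_subinvariant[OF A A_entries d_nonneg] d_nonneg d_pos w_pos rows eq
    by auto
next
  assume "\<forall>k<n. (\<Sum>l<n. d k l * w l) = \<theta> * w k"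
  hence "\<theta> \<le> spectral_radius A"
    using spectral_radius_ge_of_weighted_row_eq[where w = w, OF A n A_entries w_pos] by blast
  thus "spectral_radius A = \<theta>"
    using spectral_radius_le_weighted_row_bound[OF A n A_entries d_nonneg w_pos rows] by simp
qed

section \<open>A test vector for the quadratic bound\<close>

lemma larger_quadratic_root:
  fixes a N S :: real
  assumes "0 \<le> N * S"
  defines "\<theta> \<equiv> (a - N + sqrt ((a + N)\<^sup>2 + 4 * N * S)) / 2"
  shows "\<theta> * (\<theta> + N) = a * (\<theta> + N) + N * S" and "a \<le> \<theta>"
proof -
  have disc: "(a + N)\<^sup>2 \<le> (a + N)\<^sup>2 + 4 * N * S" using assms(1) by simp
  have root: "sqrt ((a + N)\<^sup>2 + 4 * N * S) = 2 * \<theta> - a + N" by (simp add: \<theta>_def field_simps)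
  have "(2 * \<theta> - a + N)\<^sup>2 = (a + N)\<^sup>2 + 4 * N * S"
    using root disc by (metis real_sqrt_pow2 order_trans zero_le_power2)
  thus "\<theta> * (\<theta> + N) = a * (\<theta> + N) + N * S"
    by (simp add: power2_eq_square algebra_simps)
  have "a + N \<le> sqrt ((a + N)\<^sup>2 + 4 * N * S)"
    using real_sqrt_le_mono[OF disc] by (simp add: real_le_rsqrt)
  thus "a \<le> \<theta>" by (simp add: \<theta>_def)
qed

lemma weighted_row_sum_defect:
  fixes b :: "nat \<Rightarrow> nat \<Rightarrow> real" and r :: "nat \<Rightarrow> real"
  assumes i: "i \<le> n" and diag: "b k k = 0" and row: "r k = (\<Sum>l<n. b k l)"
    and quad: "\<theta> * (\<theta> + N) = r i * (\<theta> + N) + N * (\<Sum>j<i. r j - r i)"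
  defines "u \<equiv> \<lambda>l. \<theta> + N + (if l < i then r l - r i else 0)"
  shows "(\<Sum>l<n. b k l * u l) = \<theta> * u k
           - ((\<Sum>l\<in>{..<i} - {k}. (N - b k l) * (r l - r i))
              + (if i \<le> k then (r i - r k) * (\<theta> + N) else 0))"
proof -
  define S where "S = (\<Sum>j<i. r j - r i)"
  define E where "E = (\<Sum>l\<in>{..<i} - {k}. (N - b k l) * (r l - r i))"
  have "(\<Sum>l<n. b k l * u l) = (\<theta> + N) * r k + (\<Sum>l<n. if l < i then b k l * (r l - r i) else 0)"
  proof -
    have "b k l * u l = (\<theta> + N) * b k l + (if l < i then b k l * (r l - r i) else 0)" for l
      by (simp add: u_def algebra_simps)
    thus ?thesis by (simp add: sum.distrib sum_distrib_left row)
  qed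
  also have "(\<Sum>l<n. if l < i then b k l * (r l - r i) else 0) = (\<Sum>l<i. b k l * (r l - r i))"
    using i by (simp add: sum.If_cases Int_absorb1 lessThan_subset_iff flip: lessThan_def)
  also have "\<dots> = (\<Sum>l\<in>{..<i} - {k}. b k l * (r l - r i))"
    using diag by (intro sum.mono_neutral_right) auto
  also have "\<dots> = (\<Sum>l\<in>{..<i} - {k}. N * (r l - r i)) - E"
    by (simp add: E_def sum_subtractf[symmetric] algebra_simps)
  also have "(\<Sum>l\<in>{..<i} - {k}. N * (r l - r i)) = N * S - (if k < i then N * (r k - r i) else 0)"
    by (simp add: S_def sum_distrib_left sum_diff1)
  finally have "(\<Sum>l<n. b k l * u l) = (\<theta> + N) * r k + (N * S - (if k < i then N * (r k - r i) else 0) - E)" .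
  with quad[folded S_def] show ?thesis
    unfolding E_def[symmetric] by (cases "k < i") (simp_all add: u_def algebra_simps)
qed

lemma row_defect_nonneg_eq_0_iff:
  fixes b :: "nat \<Rightarrow> nat \<Rightarrow> real" and r :: "nat \<Rightarrow> real"
  assumes b_le: "\<And>l. l < n \<Longrightarrow> b k l \<le> N"
    and sorted: "\<And>k l. k \<le> l \<Longrightarrow> l < n \<Longrightarrow> r l \<le> r k"
    and i: "i < n" and k: "k < n" and c: "0 < c"
  defines "e \<equiv> (\<Sum>l\<in>{..<i} - {k}. (N - b k l) * (r l - r i)) + (if i \<le> k then (r i - r k) * c else 0)"
  shows "0 \<le> e"
    and "e = 0 \<longleftrightarrow> (\<forall>l<i. l \<noteq> k \<longrightarrow> b k l = N \<or> r l = r i) \<and> (i \<le> k \<longrightarrow> r k = r i)"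
proof -
  let ?X = "\<Sum>l\<in>{..<i} - {k}. (N - b k l) * (r l - r i)"
  let ?Y = "if i \<le> k then (r i - r k) * c else 0"
  have slack_nonneg: "0 \<le> (N - b k l) * (r l - r i)" if "l \<in> {..<i} - {k}" for l
    using b_le[of l] sorted[of l i] that i by simp
  hence "0 \<le> ?X" by (intro sum_nonneg)
  moreover have "0 \<le> ?Y" using sorted[of i k] k c by simp
  ultimately show "0 \<le> e" unfolding e_def by simp
  have "e = 0 \<longleftrightarrow> ?X = 0 \<and> ?Y = 0"
    using \<open>0 \<le> ?X\<close> \<open>0 \<le> ?Y\<close> unfolding e_def by linarith
  moreover have "?X = 0 \<longleftrightarrow> (\<forall>l<i. l \<noteq> k \<longrightarrow> b k l = N \<or> r l = r i)"
    using sum_nonneg_eq_0_iff[of "{..<i} - {k}" "\<lambda>l. (N - b k l) * (r l - r i)"] slack_nonneg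
    by (auto simp: eq_commute[of N])
  moreover have "?Y = 0 \<longleftrightarrow> (i \<le> k \<longrightarrow> r k = r i)" using c by auto
  ultimately show "e = 0 \<longleftrightarrow> (\<forall>l<i. l \<noteq> k \<longrightarrow> b k l = N \<or> r l = r i) \<and> (i \<le> k \<longrightarrow> r k = r i)"
    by blast
qed

lemma antitone_Least_index_of_value:
  fixes r :: "nat \<Rightarrow> 'a :: linorder"
  assumes sorted: "\<And>k l. k \<le> l \<Longrightarrow> l < n \<Longrightarrow> r l \<le> r k" and i: "i < n"
  defines "t \<equiv> LEAST t. r t = r i"
  shows "t \<le> i" and "\<And>l. l < t \<Longrightarrow> r l \<noteq> r i" and "\<And>m. t \<le> m \<Longrightarrow> m \<le> i \<Longrightarrow> r m = r i"
proof -
  show "t \<le> i" unfolding t_def by (rule Least_le) simp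
  show "r l \<noteq> r i" if "l < t" for l
    using not_less_Least[of l "\<lambda>t. r t = r i"] that unfolding t_def by simp
  show "r m = r i" if "t \<le> m" "m \<le> i" for m
  proof (rule order_antisym)
    have "r t = r i" unfolding t_def by (rule LeastI) simp
    thus "r m \<le> r i" using sorted[of t m] that i by simp
    show "r i \<le> r m" using sorted[of m i] that i by simp
  qed
qed

lemma antitone_tail_condition_imp:
  fixes r :: "nat \<Rightarrow> 'a :: linorder" and P :: "nat \<Rightarrow> nat \<Rightarrow> bool"
  assumes sorted: "\<And>k l. k \<le> l \<Longrightarrow> l < n \<Longrightarrow> r l \<le> r k" and i: "i < n"
    and pairs: "\<And>k l. k < n \<Longrightarrow> l < i \<Longrightarrow> l \<noteq> k \<Longrightarrow> P k l \<or> r l = r i"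
    and tail: "\<And>k. i \<le> k \<Longrightarrow> k < n \<Longrightarrow> r k = r i"
  shows "(\<forall>k<n. r k = r 0) \<or>
    (\<exists>t. 1 \<le> t \<and> t \<le> i \<and> (\<forall>k<n. \<forall>l<t. k \<noteq> l \<longrightarrow> P k l) \<and> (\<forall>m. t \<le> m \<and> m < n \<longrightarrow> r m = r t))"
proof -
  define t where "t = (LEAST t. r t = r i)"
  note first = antitone_Least_index_of_value[where r = r, OF sorted i, folded t_def]
  have from_t: "r m = r t" if "t \<le> m" "m < n" for m
  proof (cases "m \<le> i")
    case True
    thus ?thesis using first(3)[where m = m] first(3)[where m = t] first(1) that(1) True by simp
  next
    case False
    thus ?thesis using tail[of m] that(2) first(3)[where m = t] first(1) by simp
  qed
  show ?thesis
  proof (cases "t = 0")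
    case True
    have "r k = r 0" if "k < n" for k using from_t[of k] True that by simp
    thus ?thesis by blast
  next
    case False
    have off_t: "\<forall>k<n. \<forall>l<t. k \<noteq> l \<longrightarrow> P k l"
    proof (intro allI impI)
      fix k l assume "k < n" "l < t" "k \<noteq> l"
      thus "P k l" using pairs[of k l] first(2)[where l = l] first(1) by auto
    qed
    have "\<forall>m. t \<le> m \<and> m < n \<longrightarrow> r m = r t" using from_t by blast
    moreover have "1 \<le> t" using False by simp
    ultimately show ?thesis
      by (intro disjI2 exI[of _ t] conjI) (assumption | rule off_t first(1))+
  qed
qed

lemma antitone_tail_condition_iff:
  fixes r :: "nat \<Rightarrow> 'a :: linorder" and P :: "nat \<Rightarrow> nat \<Rightarrow> bool"
  assumes sorted: "\<And>k l. k \<le> l \<Longrightarrow> l < n \<Longrightarrow> r l \<le> r k" and i: "i < n"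
  shows "((\<forall>k<n. \<forall>l<i. l \<noteq> k \<longrightarrow> P k l \<or> r l = r i) \<and> (\<forall>k. i \<le> k \<and> k < n \<longrightarrow> r k = r i))
    \<longleftrightarrow> (\<forall>k<n. r k = r 0) \<or>
        (\<exists>t. 1 \<le> t \<and> t \<le> i \<and> (\<forall>k<n. \<forall>l<t. k \<noteq> l \<longrightarrow> P k l) \<and> (\<forall>m. t \<le> m \<and> m < n \<longrightarrow> r m = r t))"
    (is "?lhs \<longleftrightarrow> ?rhs")
proof
  assume ?lhs
  thus ?rhs
    by (intro antitone_tail_condition_imp[where r = r and P = P, OF sorted i]) blast+
next
  assume ?rhs
  thus ?lhs
  proof
    assume "\<forall>k<n. r k = r 0"
    hence "\<And>l. l < n \<Longrightarrow> r l = r i" using i by metis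
    thus ?lhs using i by (meson less_trans)
  next
    assume "\<exists>t. 1 \<le> t \<and> t \<le> i \<and> (\<forall>k<n. \<forall>l<t. k \<noteq> l \<longrightarrow> P k l) \<and> (\<forall>m. t \<le> m \<and> m < n \<longrightarrow> r m = r t)"
    then obtain t where t: "t \<le> i" "\<And>k l. k < n \<Longrightarrow> l < t \<Longrightarrow> k \<noteq> l \<Longrightarrow> P k l"
      "\<And>m. t \<le> m \<Longrightarrow> m < n \<Longrightarrow> r m = r t"
      by blast
    have ri: "r i = r t" using t(3)[OF t(1) i] .
    show ?lhs
    proof (intro conjI allI impI)
      fix k l assume kl: "k < n" "l < i" "l \<noteq> k"
      show "P k l \<or> r l = r i"
      proof (cases "l < t")
        case True
        thus ?thesis using t(2) kl by blast
      next
        case False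
        thus ?thesis using t(3)[of l] kl i ri by simp
      qed
    next
      fix k assume "i \<le> k \<and> k < n"
      thus "r k = r i" using t(1) t(3)[of k] ri by simp
    qed
  qed
qed

lemma weights_for_quadratic_row_bound:
  fixes b :: "nat \<Rightarrow> nat \<Rightarrow> real" and r :: "nat \<Rightarrow> real"
  assumes b_pos: "\<And>k l. k < n \<Longrightarrow> l < n \<Longrightarrow> k \<noteq> l \<Longrightarrow> 0 < b k l"
    and b_diag: "\<And>k. k < n \<Longrightarrow> b k k = 0"
    and b_le: "\<And>k l. k < n \<Longrightarrow> l < n \<Longrightarrow> b k l \<le> N" and N: "0 < N"
    and r: "\<And>k. k < n \<Longrightarrow> r k = (\<Sum>l<n. b k l)"
    and sorted: "\<And>k l. k \<le> l \<Longrightarrow> l < n \<Longrightarrow> r l \<le> r k" and i: "i < n"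
  defines "\<theta> \<equiv> (r i - N + sqrt ((r i + N)\<^sup>2 + 4 * N * (\<Sum>k<i. r k - r i))) / 2"
  obtains u where "\<And>k. k < n \<Longrightarrow> 0 < u k"
    and "\<And>k. k < n \<Longrightarrow> (\<Sum>l<n. b k l * u l) \<le> \<theta> * u k"
    and "(\<forall>k<n. (\<Sum>l<n. b k l * u l) = \<theta> * u k) \<longleftrightarrow>
           (\<forall>k<n. r k = r 0) \<or>
           (\<exists>t. 1 \<le> t \<and> t \<le> i \<and> (\<forall>k<n. \<forall>l<t. k \<noteq> l \<longrightarrow> b k l = N) \<and>
                (\<forall>m. t \<le> m \<and> m < n \<longrightarrow> r m = r t))"
proof -
  have "0 \<le> r i"
    unfolding r[OF i] using b_pos[OF i] b_diag[OF i] by (intro sum_nonneg) (metis less_eq_real_def lessThan_iff)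
  have r_ge: "r i \<le> r l" if "l < i" for l using sorted[of l i] that i by simp
  have "0 \<le> N * (\<Sum>k<i. r k - r i)"
    using N r_ge by (intro mult_nonneg_nonneg sum_nonneg) auto
  note root = larger_quadratic_root[OF this, of "r i", folded \<theta>_def]
  have \<theta>_plus_N_pos: "0 < \<theta> + N" using root(2) \<open>0 \<le> r i\<close> N by linarith
  define u where "u l = \<theta> + N + (if l < i then r l - r i else 0)" for l
  define e where "e k = (\<Sum>l\<in>{..<i} - {k}. (N - b k l) * (r l - r i))
    + (if i \<le> k then (r i - r k) * (\<theta> + N) else 0)" for k
  have u_pos: "0 < u l" for l using \<theta>_plus_N_pos r_ge[of l] by (cases "l < i") (simp_all add: u_def)
  have row_defect: "(\<Sum>l<n. b k l * u l) = \<theta> * u k - e k" if "k < n" for k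
    unfolding u_def e_def
    by (rule weighted_row_sum_defect) (use i b_diag r root(1) that in auto)
  have defect: "0 \<le> e k"
    "e k = 0 \<longleftrightarrow> (\<forall>l<i. l \<noteq> k \<longrightarrow> b k l = N \<or> r l = r i) \<and> (i \<le> k \<longrightarrow> r k = r i)"
    if "k < n" for k
    using row_defect_nonneg_eq_0_iff[where b = b and r = r and c = "\<theta> + N",
        OF b_le[OF that] sorted i that \<theta>_plus_N_pos]
    unfolding e_def by blast+
  show thesis
  proof
    show "0 < u k" for k by (fact u_pos)
    show "(\<Sum>l<n. b k l * u l) \<le> \<theta> * u k" if "k < n" for k
      using row_defect[OF that] defect(1)[OF that] by simp
    have "(\<forall>k<n. (\<Sum>l<n. b k l * u l) = \<theta> * u k) \<longleftrightarrow> (\<forall>k<n. e k = 0)"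
      using row_defect by auto
    also have "\<dots> \<longleftrightarrow> (\<forall>k<n. \<forall>l<i. l \<noteq> k \<longrightarrow> b k l = N \<or> r l = r i) \<and> (\<forall>k. i \<le> k \<and> k < n \<longrightarrow> r k = r i)"
      using defect(2) by blast
    also have "\<dots> \<longleftrightarrow> (\<forall>k<n. r k = r 0) \<or>
           (\<exists>t. 1 \<le> t \<and> t \<le> i \<and> (\<forall>k<n. \<forall>l<t. k \<noteq> l \<longrightarrow> b k l = N) \<and>
                (\<forall>m. t \<le> m \<and> m < n \<longrightarrow> r m = r t))"
      by (rule antitone_tail_condition_iff[OF sorted i])
    finally show "(\<forall>k<n. (\<Sum>l<n. b k l * u l) = \<theta> * u k) \<longleftrightarrow> \<dots>" .
  qed
qed

section \<open>Distance matrices of connected graphs\<close>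

lemma gdist_eq_0: "i < n \<Longrightarrow> gdist n E i i = 0"
  unfolding gdist_def by (rule Least_eq_0, rule exI[of _ "[i]"], simp add: is_walk_def)

lemma gdist_pos:
  assumes "connected_graph n E" "i < n" "j < n" "i \<noteq> j"
  shows "0 < gdist n E i j"
proof (rule ccontr)
  assume "\<not> 0 < gdist n E i j"
  obtain p where p: "is_walk n E p i j"
    using assms unfolding connected_graph_def by blast
  hence "\<exists>k p. is_walk n E p i j \<and> length p = Suc k"
    by (intro exI[of _ "length p - 1"] exI[of _ p]) (auto simp: is_walk_def)
  from LeastI_ex[OF this] \<open>\<not> 0 < gdist n E i j\<close>
  obtain q where "is_walk n E q i j" "length q = 1"
    unfolding gdist_def by auto
  thus False using assms(4) by (cases q) (auto simp: is_walk_def)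
qed

lemma transmission_pos:
  assumes "connected_graph n E" "2 \<le> n" "k < n"
  shows "0 < transmission n E k"
proof -
  define j where "j = (if k = 0 then 1 else 0 :: nat)"
  have j: "j < n" "j \<noteq> k" using assms unfolding j_def by auto
  have "0 < real (gdist n E k j)" using gdist_pos[OF assms(1,3) j(1)] j(2) by simp
  also have "\<dots> \<le> (\<Sum>l<n. real (gdist n E k l))"
    by (rule member_le_sum) (use j in auto)
  finally show ?thesis unfolding transmission_def .
qed

lemma spectral_radius_dist_mat_scaled_row_bound:
  fixes T u :: "nat \<Rightarrow> real"
  assumes conn: "connected_graph n E" and n: "0 < n"
    and T_pos: "\<And>k. k < n \<Longrightarrow> 0 < T k" and u_pos: "\<And>k. k < n \<Longrightarrow> 0 < u k"
    and rows: "\<And>k. k < n \<Longrightarrow> (\<Sum>l<n. real (gdist n E k l) * T l / T k * u l) \<le> \<theta> * u k"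
  shows "spectral_radius (dist_mat n E) \<le> \<theta>"
    and "spectral_radius (dist_mat n E) = \<theta>
           \<longleftrightarrow> (\<forall>k<n. (\<Sum>l<n. real (gdist n E k l) * T l / T k * u l) = \<theta> * u k)"
proof -
  define w where "w l = T l * u l" for l
  have w_pos: "0 < w l" if "l < n" for l
    unfolding w_def using T_pos u_pos that by simp
  have weighted_rows: "(\<Sum>l<n. real (gdist n E k l) * w l)
      = T k * (\<Sum>l<n. real (gdist n E k l) * T l / T k * u l)" if "k < n" for k
    using T_pos[OF that] by (simp add: w_def sum_distrib_left mult.assoc)
  have weighted_rows_le: "(\<Sum>l<n. real (gdist n E k l) * w l) \<le> \<theta> * w k" if "k < n" for k
    unfolding weighted_rows[OF that] using rows[OF that] T_pos[OF that]
    by (simp add: w_def mult.left_commute)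
  have weighted_rows_eq_iff: "(\<Sum>l<n. real (gdist n E k l) * w l) = \<theta> * w k
      \<longleftrightarrow> (\<Sum>l<n. real (gdist n E k l) * T l / T k * u l) = \<theta> * u k" if "k < n" for k
    unfolding weighted_rows[OF that] using T_pos[OF that] by (simp add: w_def mult.left_commute)
  have A: "dist_mat n E \<in> carrier_mat n n" unfolding dist_mat_def by simp
  have A_entries: "dist_mat n E $$ (k, l) = complex_of_real (real (gdist n E k l))"
    if "k < n" "l < n" for k l
    unfolding dist_mat_def using that by simp
  have d_nonneg: "0 \<le> real (gdist n E k l)" if "k < n" "l < n" for k l
    by simp
  have d_pos: "0 < real (gdist n E k l)" if "k < n" "l < n" "k \<noteq> l" for k l
    using gdist_pos[OF conn that] by simp
  show "spectral_radius (dist_mat n E) \<le> \<theta>"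
    by (rule spectral_radius_le_weighted_row_bound[OF A n A_entries d_nonneg w_pos weighted_rows_le])
  show "spectral_radius (dist_mat n E) = \<theta>
      \<longleftrightarrow> (\<forall>k<n. (\<Sum>l<n. real (gdist n E k l) * T l / T k * u l) = \<theta> * u k)"
    using spectral_radius_eq_weighted_row_bound_iff[OF A n A_entries d_nonneg d_pos w_pos weighted_rows_le]
      weighted_rows_eq_iff by simp
qed

theorem theorem5:
  fixes n :: nat and E :: "nat \<Rightarrow> nat \<Rightarrow> bool" and \<alpha> :: real and i :: nat
  defines "M \<equiv> gen_avg_trans n E \<alpha>"
    and "N \<equiv> Max {real (gdist n E k l) * transmission n E l powr \<alpha> / transmission n E k powr \<alpha>
                   | k l. k < n \<and> l < n}"
  assumes conn: "connected_graph n E"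
    and n2: "n \<ge> 2"
    and sorted: "\<And>k l. k \<le> l \<Longrightarrow> l < n \<Longrightarrow> M l \<le> M k"
    and i: "i < n"
  shows "spectral_radius (dist_mat n E)
           \<le> (M i - N + sqrt ((M i + N)\<^sup>2 + 4 * N * (\<Sum>k<i. M k - M i))) / 2
    \<and> (spectral_radius (dist_mat n E)
           = (M i - N + sqrt ((M i + N)\<^sup>2 + 4 * N * (\<Sum>k<i. M k - M i))) / 2
         \<longleftrightarrow> (\<forall>k<n. M k = M 0) \<or>
             (\<exists>t. 1 \<le> t \<and> t \<le> i \<and>
                 (\<forall>k<n. \<forall>l<t. k \<noteq> l \<longrightarrow>
                    real (gdist n E k l) * transmission n E l powr \<alpha> / transmission n E k powr \<alpha> = N) \<and>
                 (\<forall>m. t \<le> m \<and> m < n \<longrightarrow> M m = M t)))"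
proof -
  define T where "T k = transmission n E k powr \<alpha>" for k
  define b where "b k l = real (gdist n E k l) * T l / T k" for k l
  have T_pos: "0 < T k" if "k < n" for k
    unfolding T_def using transmission_pos[OF conn n2 that] by simp
  have b_pos: "0 < b k l" if "k < n" "l < n" "k \<noteq> l" for k l
    unfolding b_def using gdist_pos[OF conn that] T_pos that by simp
  have b_diag: "b k k = 0" if "k < n" for k
    unfolding b_def using gdist_eq_0[OF that] by simp
  have b_le: "b k l \<le> N" if "k < n" "l < n" for k l
    unfolding N_def b_def T_def by (rule Max_ge) (use that in \<open>auto intro: finite_image_set2\<close>)
  have N_pos: "0 < N" using b_pos[of 0 1] b_le[of 0 1] n2 by simp
  have M_row: "M k = (\<Sum>l<n. b k l)" for k
    unfolding M_def gen_avg_trans_def b_def T_def by (simp add: sum_divide_distrib)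
  define \<theta> where "\<theta> = (M i - N + sqrt ((M i + N)\<^sup>2 + 4 * N * (\<Sum>k<i. M k - M i))) / 2"
  obtain u where u_pos: "\<And>k. k < n \<Longrightarrow> 0 < u k"
    and rows: "\<And>k. k < n \<Longrightarrow> (\<Sum>l<n. b k l * u l) \<le> \<theta> * u k"
    and rows_eq_iff: "(\<forall>k<n. (\<Sum>l<n. b k l * u l) = \<theta> * u k) \<longleftrightarrow>
           (\<forall>k<n. M k = M 0) \<or>
           (\<exists>t. 1 \<le> t \<and> t \<le> i \<and> (\<forall>k<n. \<forall>l<t. k \<noteq> l \<longrightarrow> b k l = N) \<and>
                (\<forall>m. t \<le> m \<and> m < n \<longrightarrow> M m = M t))"
    using weights_for_quadratic_row_bound[OF b_pos b_diag b_le N_pos M_row sorted i, folded \<theta>_def]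
    by blast
  note row_bound = spectral_radius_dist_mat_scaled_row_bound[OF conn _ T_pos u_pos rows[unfolded b_def]]
  show ?thesis
    using row_bound rows_eq_iff n2 unfolding \<theta>_def b_def T_def by simp
qed

end
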